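(* Let $d, n$ be positive integers and let $\delta \ge 0$ satisfy $\delta n < 1$. Let $\mathbf{v}_1, \ldots, \mathbf{v}_n \in \mathbb{R}^d$ be unit vectors that are pairwise $\delta$-orthogonal, i.e. $|\mathbf{v}_i \cdot \mathbf{v}_j| \le \delta$ for all $i \neq j$. Let $\mathbf{z} = (z_1, \ldots, z_n)^T \in \mathbb{R}^n$ and suppose that $\mathbf{y} = \sum_{k=1}^n z_k \mathbf{v}_k$ (equivalently $\mathbf{y} = \mathbf{A}\mathbf{z}$ with $\mathbf{A} = [\mathbf{v}_1, \ldots, \mathbf{v}_n]$) satisfies $\lVert \mathbf{y} \rVert_2 = 1$. Then $$\left|\sum_{k=1}^{n} z_k\right| \le \lVert \mathbf{z} \rVert_1 \le \sqrt{\frac{n}{1 - \delta n}}.$$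
   Context: $\lVert \cdot \rVert_1$ and $\lVert \cdot \rVert_2$ denote the $\ell_1$ and Euclidean norms. Two unit vectors are called $\delta$-orthogonal if the absolute value of their dot product is at most $\delta$. *)

theory Defs
  imports "HOL-Analysis.Analysis"
begin

end

theory Submission
  imports Defs
begin

text \<open>Expanding \<open>\<parallel>y\<parallel>\<^sup>2 = y \<bullet> y\<close> as a Gram form, the diagonal contributes \<open>\<parallel>z\<parallel>\<^sub>2\<^sup>2\<close> and the
  off-diagonal terms are at least \<open>-\<delta> \<parallel>z\<parallel>\<^sub>1\<^sup>2\<close>. Together with Cauchy--Schwarz,
  \<open>\<parallel>z\<parallel>\<^sub>1\<^sup>2 \<le> n \<parallel>z\<parallel>\<^sub>2\<^sup>2\<close>, this gives \<open>(1 - \<delta> n) \<parallel>z\<parallel>\<^sub>1\<^sup>2 \<le> n \<parallel>y\<parallel>\<^sup>2\<close>.\<close>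

lemma norm_sum_scaleR_almost_orthonormal_ge:
  fixes v :: "'i \<Rightarrow> 'a :: real_inner" and z :: "'i \<Rightarrow> real" and \<delta> :: real
  assumes "\<delta> \<ge> 0"
    and unit: "\<And>i. i \<in> I \<Longrightarrow> norm (v i) = 1"
    and almost_orth: "\<And>i j. i \<in> I \<Longrightarrow> j \<in> I \<Longrightarrow> i \<noteq> j \<Longrightarrow> \<bar>v i \<bullet> v j\<bar> \<le> \<delta>"
  shows "(\<Sum>k\<in>I. (z k)\<^sup>2) - \<delta> * (\<Sum>k\<in>I. \<bar>z k\<bar>)\<^sup>2 \<le> (norm (\<Sum>k\<in>I. z k *\<^sub>R v k))\<^sup>2"
proof -
  have entry_ge: "(if i = j then (z i)\<^sup>2 else 0) - \<delta> * (\<bar>z i\<bar> * \<bar>z j\<bar>) \<le> z i * z j * (v i \<bullet> v j)"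
    if "i \<in> I" "j \<in> I" for i j
  proof (cases "i = j")
    case True
    then have "v i \<bullet> v j = 1" using unit \<open>i \<in> I\<close> by (simp add: dot_square_norm)
    then show ?thesis using True \<open>\<delta> \<ge> 0\<close> by (simp add: power2_eq_square)
  next
    case False
    then have "\<bar>z i * z j * (v i \<bullet> v j)\<bar> \<le> \<bar>z i\<bar> * \<bar>z j\<bar> * \<delta>"
      using almost_orth that by (simp add: abs_mult mult_left_mono)
    then show ?thesis using False by (simp add: algebra_simps)
  qed
  have "(\<Sum>k\<in>I. (z k)\<^sup>2) - \<delta> * (\<Sum>k\<in>I. \<bar>z k\<bar>)\<^sup>2
      = (\<Sum>i\<in>I. \<Sum>j\<in>I. (if i = j then (z i)\<^sup>2 else 0) - \<delta> * (\<bar>z i\<bar> * \<bar>z j\<bar>))"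
    by (cases "finite I")
      (simp_all add: sum_subtractf power2_eq_square sum_distrib_left sum_distrib_right mult_ac)
  also have "\<dots> \<le> (\<Sum>i\<in>I. \<Sum>j\<in>I. z i * z j * (v i \<bullet> v j))"
    by (intro sum_mono entry_ge)
  also have "\<dots> = (norm (\<Sum>k\<in>I. z k *\<^sub>R v k))\<^sup>2"
    by (simp add: power2_norm_eq_inner inner_sum_left inner_sum_right sum_distrib_left mult_ac inner_commute)
  finally show ?thesis .
qed

lemma sum_abs_le_norm_sum_scaleR_almost_orthonormal:
  fixes v :: "'i \<Rightarrow> 'a :: real_inner" and z :: "'i \<Rightarrow> real" and \<delta> :: real
  assumes "\<delta> \<ge> 0" and small: "\<delta> * card I < 1"
    and "\<And>i. i \<in> I \<Longrightarrow> norm (v i) = 1"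
    and "\<And>i j. i \<in> I \<Longrightarrow> j \<in> I \<Longrightarrow> i \<noteq> j \<Longrightarrow> \<bar>v i \<bullet> v j\<bar> \<le> \<delta>"
  shows "(\<Sum>k\<in>I. \<bar>z k\<bar>) \<le> norm (\<Sum>k\<in>I. z k *\<^sub>R v k) * sqrt (card I / (1 - \<delta> * card I))"
proof -
  define S1 where "S1 = (\<Sum>k\<in>I. \<bar>z k\<bar>)"
  define S2 where "S2 = (\<Sum>k\<in>I. (z k)\<^sup>2)"
  define N where "N = norm (\<Sum>k\<in>I. z k *\<^sub>R v k)"
  have cauchy_schwarz: "S1\<^sup>2 \<le> card I * S2"
    using sum_squared_le_sum_of_squares[of "\<lambda>k. \<bar>z k\<bar>" I] by (simp add: S1_def S2_def mult.commute)
  have gram: "S2 - \<delta> * S1\<^sup>2 \<le> N\<^sup>2"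
    unfolding S1_def S2_def N_def by (rule norm_sum_scaleR_almost_orthonormal_ge) (use assms in auto)
  have "S1\<^sup>2 * (1 - \<delta> * card I) \<le> card I * (S2 - \<delta> * S1\<^sup>2)"
    using cauchy_schwarz by (simp add: algebra_simps)
  also have "\<dots> \<le> card I * N\<^sup>2"
    using gram by (simp add: mult_left_mono)
  finally have "S1\<^sup>2 \<le> N\<^sup>2 * (card I / (1 - \<delta> * card I))"
    using small by (simp add: field_simps)
  then have "sqrt (S1\<^sup>2) \<le> sqrt (N\<^sup>2) * sqrt (card I / (1 - \<delta> * card I))"
    by (metis real_sqrt_le_mono real_sqrt_mult)
  moreover have "S1 \<ge> 0" "N \<ge> 0"
    by (simp_all add: S1_def N_def sum_nonneg)
  ultimately show ?thesis
    by (simp add: S1_def N_def)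
qed

theorem mainTheorem1:
  fixes n :: nat and \<delta> :: real
    and v :: "nat \<Rightarrow> real ^ 'd" and z :: "nat \<Rightarrow> real" and y :: "real ^ 'd"
  assumes "n \<ge> 1"
    and "\<delta> \<ge> 0" and "\<delta> * real n < 1"
    and "\<forall>i\<in>{1..n}. norm (v i) = 1"
    and "\<forall>i\<in>{1..n}. \<forall>j\<in>{1..n}. i \<noteq> j \<longrightarrow> \<bar>v i \<bullet> v j\<bar> \<le> \<delta>"
    and "y = (\<Sum>k=1..n. z k *\<^sub>R v k)"
    and "norm y = 1"
  shows "\<bar>\<Sum>k=1..n. z k\<bar> \<le> (\<Sum>k=1..n. \<bar>z k\<bar>)
    \<and> (\<Sum>k=1..n. \<bar>z k\<bar>) \<le> sqrt (real n / (1 - \<delta> * real n))"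
proof
  show "\<bar>\<Sum>k=1..n. z k\<bar> \<le> (\<Sum>k=1..n. \<bar>z k\<bar>)"
    by (rule sum_abs)
  have "(\<Sum>k=1..n. \<bar>z k\<bar>) \<le> norm y * sqrt (card {1..n} / (1 - \<delta> * card {1..n}))"
    unfolding \<open>y = _\<close>
    by (rule sum_abs_le_norm_sum_scaleR_almost_orthonormal) (use assms in auto)
  then show "(\<Sum>k=1..n. \<bar>z k\<bar>) \<le> sqrt (real n / (1 - \<delta> * real n))"
    using \<open>norm y = 1\<close> by simp
qed

end
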